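(* For $r\ge1$ and a real random variable $X$ define $\nu_r(X)=\frac{r^{1/r}}{2}\left(\int_0^\infty\varepsilon^{r-1}(1-Q_X(\varepsilon))\,d\varepsilon\right)^{1/r}$. Then: (i) $\nu_r(X)$ depends only on the distribution of $X$; (ii) $\nu_r(X+k)=\nu_r(X)$ for all constants $k$; (iii) $\nu_r(\lambda X)=|\lambda|\,\nu_r(X)$ for all $\lambda\in\mathbb{R}$; (iv) $\nu_r(X)\ge0$, with $\nu_r(X)=0$ if $X$ is degenerate; (v) if $X\le_{wd}Y$ then $\nu_r(X)\le\nu_r(Y)$; consequently $\nu_r(X)\le\nu_r(Y)$ also whenever $X\le_{disp}Y$ (i.e. $F^{-1}(v)-F^{-1}(u)\le G^{-1}(v)-G^{-1}(u)$ for all $0<u<v<1$, $X\sim F$, $Y\sim G$). Moreover, if $X$ takes values in $\mathbb{N}_0$, then $\nu_r(X)=\frac12\left(\sum_{k=0}^\infty\big((k+1)^r-k^r\big)\big(1-Q_X(k)\big)\right)^{1/r}$, where $Q_X(0):=\max_k\Pr(X=k)$.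
   Context: For a real random variable $X$, its Lévy concentration function is $Q_X(\varepsilon)=\sup_{x_0\in\mathbb{R}}\Pr\{X\in[x_0,x_0+\varepsilon]\}$, $\varepsilon>0$. For random variables $X,Y$, write $X\le_{wd}Y$ if $Q_X(\varepsilon)\ge Q_Y(\varepsilon)$ for all $\varepsilon>0$. $F^{-1}(u)=\inf\{x:F(x)\ge u\}$. *)

theory Defs
  imports "HOL-Probability.Probability"
begin

definition conc :: "'a measure \<Rightarrow> ('a \<Rightarrow> real) \<Rightarrow> real \<Rightarrow> real" where
  "conc M X \<epsilon> = (SUP x0. measure M {\<omega> \<in> space M. X \<omega> \<in> {x0..x0 + \<epsilon>}})"

definition wd_le :: "'a measure \<Rightarrow> ('a \<Rightarrow> real) \<Rightarrow> 'b measure \<Rightarrow> ('b \<Rightarrow> real) \<Rightarrow> bool" where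
  "wd_le M X N Y \<longleftrightarrow> (\<forall>\<epsilon>>0. conc N Y \<epsilon> \<le> conc M X \<epsilon>)"

definition quantile :: "(real \<Rightarrow> real) \<Rightarrow> real \<Rightarrow> real" where
  "quantile F u = Inf {x. u \<le> F x}"

definition disp_le :: "'a measure \<Rightarrow> ('a \<Rightarrow> real) \<Rightarrow> 'b measure \<Rightarrow> ('b \<Rightarrow> real) \<Rightarrow> bool" where
  "disp_le M X N Y \<longleftrightarrow>
     (\<forall>u v. 0 < u \<and> u < v \<and> v < 1 \<longrightarrow>
        quantile (cdf (distr M borel X)) v - quantile (cdf (distr M borel X)) u
        \<le> quantile (cdf (distr N borel Y)) v - quantile (cdf (distr N borel Y)) u)"

definition enn_root :: "real \<Rightarrow> ennreal \<Rightarrow> ennreal" where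
  "enn_root r I = (if I = \<infinity> then \<infinity> else ennreal (enn2real I powr (1 / r)))"

definition nu :: "real \<Rightarrow> 'a measure \<Rightarrow> ('a \<Rightarrow> real) \<Rightarrow> ennreal" where
  "nu r M X = ennreal (r powr (1 / r) / 2) *
     enn_root r (\<integral>\<^sup>+ \<epsilon>. indicator {0<..} \<epsilon> * ennreal (\<epsilon> powr (r - 1) * (1 - conc M X \<epsilon>)) \<partial>lborel)"

end

(*
  All claims are statements about the concentration function Q_X and the integral
  I(Q) = \<integral>\<^sub>0\<^sup>\<infinity> \<epsilon>^(r-1) (1 - Q \<epsilon>) d\<epsilon>, of which \<nu>_r is an increasing function. Q_X depends only on
  the law of X, is shift invariant and satisfies Q_(aX) (|a| \<epsilon>) = Q_X \<epsilon>; the substitution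
  \<epsilon> \<mapsto> |a| \<epsilon> turns the latter into I(Q_(aX)) = |a|^r I(Q_X). I is antitone in Q, which gives
  monotonicity in the weak dispersive order, and the dispersive order implies the weak one by
  comparing quantile functions. For integer-valued X, Q_X is constant on every [k, k+1), so the
  integral splits into the series \<Sum> ((k+1)^r - k^r)/r (1 - Q_X k).
*)
theory Submission
  imports Defs
begin

lemma conc_eq_distr:
  assumes "X \<in> borel_measurable M"
  shows "conc M X e = (SUP x0. measure (distr M borel X) {x0..x0 + e})"
  unfolding conc_def using assms
  by (simp add: measure_distr vimage_def Int_def conj_commute)

lemma conc_eq_if_distr_eq:
  assumes "X \<in> borel_measurable M" "Y \<in> borel_measurable N"
    and "distr M borel X = distr N borel Y"
  shows "conc M X = conc N Y"
  using assms by (simp add: fun_eq_iff conc_eq_distr)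

context prob_space
begin

lemma bdd_above_conc: "bdd_above (range (\<lambda>x0. prob {\<omega> \<in> space M. X \<omega> \<in> {x0..x0 + e}}))"
  by (intro bdd_aboveI[of _ 1]) auto

lemma conc_le_1: "conc M X e \<le> 1"
  unfolding conc_def by (intro cSUP_least) auto

lemma prob_Icc_le_conc: "prob {\<omega> \<in> space M. X \<omega> \<in> {x0..x0 + e}} \<le> conc M X e"
  unfolding conc_def by (rule cSUP_upper[OF _ bdd_above_conc]) auto

lemma mono_conc:
  assumes X: "X \<in> borel_measurable M"
  shows "mono (conc M X)"
proof
  fix e e' :: real assume "e \<le> e'"
  show "conc M X e \<le> conc M X e'"
    unfolding conc_def[of M X e]
  proof (rule cSUP_least)
    fix x0
    have "prob {\<omega> \<in> space M. X \<omega> \<in> {x0..x0 + e}} \<le> prob {\<omega> \<in> space M. X \<omega> \<in> {x0..x0 + e'}}"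
      using \<open>e \<le> e'\<close> X by (intro finite_measure_mono) auto
    also have "\<dots> \<le> conc M X e'" by (rule prob_Icc_le_conc)
    finally show "prob {\<omega> \<in> space M. X \<omega> \<in> {x0..x0 + e}} \<le> conc M X e'" .
  qed simp
qed

lemma borel_measurable_conc:
  "X \<in> borel_measurable M \<Longrightarrow> conc M X \<in> borel_measurable borel"
  by (rule borel_measurable_mono[OF mono_conc])

lemma conc_affine:
  assumes "a \<noteq> 0"
  shows "conc M (\<lambda>\<omega>. a * X \<omega> + k) (\<bar>a\<bar> * t) = conc M X t"
proof -
  define h where "h x0 = (if a > 0 then (x0 - k) / a else (x0 - k) / a - t)" for x0
  have preimage: "a * x + k \<in> {x0..x0 + \<bar>a\<bar> * t} \<longleftrightarrow> x \<in> {h x0..h x0 + t}" for x x0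
    using assms by (cases "a > 0") (auto simp: h_def field_simps)
  have "y = h (if a > 0 then a * y + k else a * (y + t) + k)" for y
    using assms by (auto simp: h_def)
  then have surj_h: "range h = UNIV" by blast
  have "conc M (\<lambda>\<omega>. a * X \<omega> + k) (\<bar>a\<bar> * t)
      = (SUP x0. prob {\<omega> \<in> space M. X \<omega> \<in> {h x0..h x0 + t}})"
    by (simp only: conc_def preimage)
  also have "\<dots> = (SUP y \<in> range h. prob {\<omega> \<in> space M. X \<omega> \<in> {y..y + t}})"
    by (simp add: image_image)
  also have "\<dots> = conc M X t"
    unfolding conc_def surj_h ..
  finally show ?thesis .
qed

lemma conc_add_const: "conc M (\<lambda>\<omega>. X \<omega> + k) = conc M X"
  using conc_affine[of 1 X k] by (simp add: fun_eq_iff)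

lemma conc_mult: "a \<noteq> 0 \<Longrightarrow> conc M (\<lambda>\<omega>. a * X \<omega>) (\<bar>a\<bar> * t) = conc M X t"
  using conc_affine[of a X 0] by simp

lemma conc_AE_const:
  assumes X: "X \<in> borel_measurable M" and "AE \<omega> in M. X \<omega> = c" and "0 \<le> e"
  shows "conc M X e = 1"
proof (rule antisym[OF conc_le_1])
  have "prob {\<omega> \<in> space M. X \<omega> \<in> {c..c + e}} = 1"
    using assms by (subst prob_Collect_eq_1) (auto elim!: eventually_mono)
  then show "1 \<le> conc M X e"
    using prob_Icc_le_conc[of X c e] by simp
qed

end

definition conc_integral :: "real \<Rightarrow> (real \<Rightarrow> real) \<Rightarrow> ennreal" where
  "conc_integral r c = (\<integral>\<^sup>+ \<epsilon>. indicator {0<..} \<epsilon> * ennreal (\<epsilon> powr (r - 1) * (1 - c \<epsilon>)) \<partial>lborel)"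

lemma nu_eq_conc_integral:
  "nu r M X = ennreal (r powr (1 / r) / 2) * enn_root r (conc_integral r (conc M X))"
  by (simp add: nu_def conc_integral_def)

lemma conc_integral_antimono:
  assumes "\<And>e. 0 < e \<Longrightarrow> c' e \<le> c e"
  shows "conc_integral r c \<le> conc_integral r c'"
  unfolding conc_integral_def
proof (rule nn_integral_mono)
  fix e :: real
  show "indicator {0<..} e * ennreal (e powr (r - 1) * (1 - c e))
    \<le> indicator {0<..} e * ennreal (e powr (r - 1) * (1 - c' e))"
    using assms[of e] by (cases "0 < e") (auto intro!: ennreal_leI mult_left_mono)
qed

lemma conc_integral_eq_0:
  assumes "\<And>e. 0 < e \<Longrightarrow> c e = 1"
  shows "conc_integral r c = 0"
proof -
  have "conc_integral r c = (\<integral>\<^sup>+ (\<epsilon>::real). 0 \<partial>lborel)"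
    unfolding conc_integral_def by (rule nn_integral_cong) (auto simp: assms indicator_def)
  then show ?thesis by simp
qed

lemma conc_integral_stretch:
  assumes [measurable]: "c \<in> borel_measurable borel" "c' \<in> borel_measurable borel"
    and s: "0 < s" and c': "\<And>t. 0 < t \<Longrightarrow> c' (s * t) = c t"
  shows "conc_integral r c' = ennreal (s powr r) * conc_integral r c"
proof -
  have "conc_integral r c' = ennreal s *
      (\<integral>\<^sup>+ x. indicator {0<..} (s * x) * ennreal ((s * x) powr (r - 1) * (1 - c' (s * x))) \<partial>lborel)"
    unfolding conc_integral_def using s by (subst nn_integral_real_affine[of _ s 0]) auto
  also have "(\<lambda>x. indicator {0<..} (s * x) * ennreal ((s * x) powr (r - 1) * (1 - c' (s * x))))
      = (\<lambda>x. ennreal (s powr (r - 1)) * (indicator {0<..} x * ennreal (x powr (r - 1) * (1 - c x))))"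
  proof
    fix x :: real
    show "indicator {0<..} (s * x) * ennreal ((s * x) powr (r - 1) * (1 - c' (s * x)))
      = ennreal (s powr (r - 1)) * (indicator {0<..} x * ennreal (x powr (r - 1) * (1 - c x)))"
    proof (cases "0 < x")
      case True
      then show ?thesis using s c'[OF True] by (simp add: powr_mult ennreal_mult' mult.assoc)
    next
      case False
      then show ?thesis using s by (simp add: zero_less_mult_iff)
    qed
  qed
  also have "(\<integral>\<^sup>+ x. ennreal (s powr (r - 1)) * (indicator {0<..} x * ennreal (x powr (r - 1) * (1 - c x))) \<partial>lborel)
      = ennreal (s powr (r - 1)) * conc_integral r c"
    unfolding conc_integral_def by (rule nn_integral_cmult) measurable
  also have "ennreal s * (ennreal (s powr (r - 1)) * conc_integral r c) = ennreal (s powr r) * conc_integral r c"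
    using s by (simp add: mult.assoc[symmetric] ennreal_mult[symmetric] powr_mult_base)
  finally show ?thesis .
qed

lemma enn_root_0 [simp]: "enn_root r 0 = 0"
  by (simp add: enn_root_def)

lemma enn_root_mono:
  assumes "I \<le> J" "0 < r"
  shows "enn_root r I \<le> enn_root r J"
proof (cases "J = \<infinity>")
  case False
  then have "I \<noteq> \<infinity>" using assms(1) by (auto simp: top_unique)
  then show ?thesis using False assms
    by (auto simp: enn_root_def less_top[symmetric] intro!: ennreal_leI powr_mono2 enn2real_mono)
qed (simp add: enn_root_def)

lemma enn_root_mult:
  assumes "0 < s" "0 < r"
  shows "enn_root r (ennreal s * I) = ennreal (s powr (1 / r)) * enn_root r I"
proof (cases "I = \<infinity>")
  case True
  then show ?thesis using assms by (simp add: enn_root_def ennreal_mult_top)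
next
  case False
  then show ?thesis using assms
    by (simp add: enn_root_def ennreal_mult_eq_top_iff enn2real_mult powr_mult ennreal_mult[symmetric])
qed

context prob_space
begin

lemma nu_AE_const:
  assumes "X \<in> borel_measurable M" "AE \<omega> in M. X \<omega> = c"
  shows "nu r M X = 0"
  using conc_AE_const[OF assms] by (simp add: nu_eq_conc_integral conc_integral_eq_0)

lemma nu_add_const: "nu r M (\<lambda>\<omega>. X \<omega> + k) = nu r M X"
  by (simp add: nu_eq_conc_integral conc_add_const)

lemma nu_mult:
  assumes r: "0 < r" and X: "X \<in> borel_measurable M"
  shows "nu r M (\<lambda>\<omega>. a * X \<omega>) = ennreal \<bar>a\<bar> * nu r M X"
proof (cases "a = 0")
  case True
  then show ?thesis by (simp add: nu_AE_const)
next
  case False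
  have "conc_integral r (conc M (\<lambda>\<omega>. a * X \<omega>)) = ennreal (\<bar>a\<bar> powr r) * conc_integral r (conc M X)"
    using False X by (intro conc_integral_stretch conc_mult borel_measurable_conc) auto
  moreover have "(\<bar>a\<bar> powr r) powr (1 / r) = \<bar>a\<bar>"
    using r by (simp add: powr_powr)
  ultimately show ?thesis
    using False r by (simp add: nu_eq_conc_integral enn_root_mult ac_simps)
qed

end

lemma nu_mono_conc:
  assumes "0 < r" "\<And>e. 0 < e \<Longrightarrow> conc N Y e \<le> conc M X e"
  shows "nu r M X \<le> nu r N Y"
  unfolding nu_eq_conc_integral
  using assms by (intro mult_left_mono enn_root_mono conc_integral_antimono) auto

lemma nu_mono_wd_le: "0 < r \<Longrightarrow> wd_le M X N Y \<Longrightarrow> nu r M X \<le> nu r N Y"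
  unfolding wd_le_def by (rule nu_mono_conc) auto

lemma mono_on_obtain_Icc_of_oscillation_le:
  fixes q :: "real \<Rightarrow> real"
  assumes "a < b" and mono: "mono_on {a<..<b} q"
    and osc: "\<And>u v. a < u \<Longrightarrow> u < v \<Longrightarrow> v < b \<Longrightarrow> q v - q u \<le> e"
  obtains x0 where "\<And>u. a < u \<Longrightarrow> u < b \<Longrightarrow> q u \<in> {x0..x0 + e}"
proof
  define w where "w = (a + b) / 2"
  have w: "w \<in> {a<..<b}" using \<open>a < b\<close> by (simp add: w_def)
  have lower: "q u - e \<le> q v" if uv: "u \<in> {a<..<b}" "v \<in> {a<..<b}" for u v
  proof (cases "v < u")
    case True then show ?thesis using osc[of v u] uv by auto
  next
    case False
    then have "q u \<le> q v" using mono_onD[OF mono] uv by simp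
    moreover obtain u' where "u < u'" "u' < b" using uv dense[of u b] by auto
    then have "0 \<le> e" using osc[of u u'] mono_onD[OF mono, of u u'] uv by auto
    ultimately show ?thesis by simp
  qed
  have bdd: "bdd_below (q ` {a<..<b})"
    using lower[OF w] by (intro bdd_belowI[of _ "q w - e"]) auto
  fix u assume u: "a < u" "u < b"
  have "q u - e \<le> Inf (q ` {a<..<b})"
    using lower u w by (intro cInf_greatest) auto
  moreover have "Inf (q ` {a<..<b}) \<le> q u"
    using u by (intro cInf_lower[OF _ bdd]) auto
  ultimately show "q u \<in> {Inf (q ` {a<..<b})..Inf (q ` {a<..<b}) + e}" by simp
qed

lemma right_continuous_mono_cdf:
  assumes "real_distribution D"
  shows "right_continuous_mono (cdf D) 0 1"
proof -
  interpret real_distribution D by (rule assms)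
  show ?thesis
    by unfold_locales
       (auto simp: mono_def cdf_nondecreasing cdf_is_right_cont cdf_lim_at_bot cdf_lim_at_top_prob)
qed

lemma quantile_le_iff:
  assumes "real_distribution D" "0 < u" "u < 1"
  shows "quantile (cdf D) u \<le> x \<longleftrightarrow> u \<le> cdf D x"
  unfolding quantile_def
  using right_continuous_mono.pseudoinverse[OF right_continuous_mono_cdf[OF assms(1)] assms(2,3)] ..

lemma mono_on_quantile:
  "real_distribution D \<Longrightarrow> mono_on {0<..<1} (quantile (cdf D))"
  unfolding quantile_def by (rule right_continuous_mono.mono_I[OF right_continuous_mono_cdf])

context real_distribution
begin

lemma measure_Icc_eq_cdf_diff: "x \<le> y \<Longrightarrow> measure M {x..y} = cdf M y - measure M {..<x}"
proof -
  assume "x \<le> y"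
  then have "{x..y} = {..y} - {..<x}" "{..<x} \<subseteq> {..y}" by auto
  then show ?thesis by (simp add: finite_measure_Diff cdf_def)
qed

lemma quantile_mem_Icc:
  assumes "measure M {..<y} < u" "u < cdf M z"
  shows "quantile (cdf M) u \<in> {y..z}"
proof -
  have u: "0 < u" "u < 1"
    using assms cdf_bounded_prob[of z] measure_nonneg[of M "{..<y}"] by linarith+
  have "u \<le> cdf M (quantile (cdf M) u)"
    using quantile_le_iff[OF real_distribution_axioms u, THEN iffD1, OF order_refl] .
  moreover have "cdf M x \<le> measure M {..<y}" if "x < y" for x
    using that unfolding cdf_def by (intro finite_measure_mono) auto
  ultimately have "y \<le> quantile (cdf M) u"
    using assms(1) by (meson linorder_not_less order.strict_trans1)
  moreover have "quantile (cdf M) u \<le> z"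
    using quantile_le_iff[OF real_distribution_axioms u] assms(2) by simp
  ultimately show ?thesis by simp
qed

lemma measure_Icc_ge_of_quantile_mem:
  assumes "0 \<le> a" "a < b" "b \<le> 1"
    and q: "\<And>u. a < u \<Longrightarrow> u < b \<Longrightarrow> quantile (cdf M) u \<in> {x0..x0 + e}"
  shows "b - a \<le> measure M {x0..x0 + e}"
proof -
  have u01: "0 < u" "u < 1" if "a < u" "u < b" for u
    using that assms(1,3) by auto
  have "b \<le> cdf M (x0 + e)"
  proof (rule dense_le_bounded[OF \<open>a < b\<close>])
    fix u assume u: "a < u" "u < b"
    then show "u \<le> cdf M (x0 + e)"
      using q[OF u] quantile_le_iff[OF real_distribution_axioms u01[OF u]] by simp
  qed
  moreover have "measure M {..<x0} \<le> a"
  proof (rule dense_ge_bounded[OF \<open>a < b\<close>])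
    fix u assume u: "a < u" "u < b"
    have "\<forall>\<^sub>F y in at_left x0. cdf M y \<le> u"
    proof (rule eventually_at_leftI[of "x0 - 1"])
      fix y assume "y \<in> {x0 - 1<..<x0}"
      then have "\<not> quantile (cdf M) u \<le> y" using q[OF u] by auto
      then show "cdf M y \<le> u" using quantile_le_iff[OF real_distribution_axioms u01[OF u]] by simp
    qed simp
    then show "measure M {..<x0} \<le> u"
      by (rule tendsto_upperbound[OF cdf_at_left]) simp
  qed
  moreover have "x0 \<le> x0 + e"
    using q[of "(a + b) / 2"] \<open>a < b\<close> by simp
  ultimately show ?thesis
    using measure_Icc_eq_cdf_diff[of x0 "x0 + e"] by simp
qed

end

text \<open>If E puts mass b - a on [y, y + e], its quantile function maps (a, b) into [y, y + e]. By the
  dispersion inequality the quantile function of D maps (a, b) into some interval of length e, which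
  therefore carries D-mass at least b - a.\<close>

lemma measure_Icc_le_SUP_of_quantile_diff_le:
  assumes D: "real_distribution D" and E: "real_distribution E" and "0 \<le> e"
    and disp: "\<And>u v. 0 < u \<Longrightarrow> u < v \<Longrightarrow> v < 1 \<Longrightarrow>
      quantile (cdf D) v - quantile (cdf D) u \<le> quantile (cdf E) v - quantile (cdf E) u"
  shows "measure E {y..y + e} \<le> (SUP x. measure D {x..x + e})"
proof -
  interpret D: real_distribution D by (rule D)
  interpret E: real_distribution E by (rule E)
  have bdd: "bdd_above (range (\<lambda>x. measure D {x..x + e}))"
    by (intro bdd_aboveI[of _ 1]) auto
  define a where "a = measure E {..<y}"
  define b where "b = cdf E (y + e)"
  have E_Icc: "measure E {y..y + e} = b - a"
    using \<open>0 \<le> e\<close> by (simp add: E.measure_Icc_eq_cdf_diff a_def b_def)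
  show ?thesis
  proof (cases "a < b")
    case False
    then have "measure E {y..y + e} \<le> 0" using E_Icc by simp
    also have "\<dots> \<le> measure D {0..0 + e}" by simp
    also have "\<dots> \<le> (SUP x. measure D {x..x + e})" by (rule cSUP_upper[OF _ bdd]) simp
    finally show ?thesis .
  next
    case True
    have ab: "0 \<le> a" "b \<le> 1" by (auto simp: a_def b_def E.cdf_bounded_prob)
    have qE: "quantile (cdf E) u \<in> {y..y + e}" if "a < u" "u < b" for u
      using that by (intro E.quantile_mem_Icc) (auto simp: a_def b_def)
    have "mono_on {a<..<b} (quantile (cdf D))"
      using ab by (intro mono_on_subset[OF mono_on_quantile[OF D]]) auto
    moreover have "quantile (cdf D) v - quantile (cdf D) u \<le> e" if "a < u" "u < v" "v < b" for u v
      using disp[of u v] qE[of u] qE[of v] that ab by auto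
    ultimately obtain x0 where "\<And>u. a < u \<Longrightarrow> u < b \<Longrightarrow> quantile (cdf D) u \<in> {x0..x0 + e}"
      using mono_on_obtain_Icc_of_oscillation_le[OF True] by blast
    then have "b - a \<le> measure D {x0..x0 + e}"
      using True ab by (intro D.measure_Icc_ge_of_quantile_mem) auto
    also have "\<dots> \<le> (SUP x. measure D {x..x + e})" by (rule cSUP_upper[OF _ bdd]) simp
    finally show ?thesis using E_Icc by simp
  qed
qed

lemma disp_le_imp_wd_le:
  assumes "prob_space M" "X \<in> borel_measurable M" "prob_space N" "Y \<in> borel_measurable N"
    and "disp_le M X N Y"
  shows "wd_le M X N Y"
  unfolding wd_le_def conc_eq_distr[OF assms(2)] conc_eq_distr[OF assms(4)]
proof (intro allI impI cSUP_least)
  fix e y :: real assume "0 < e"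
  then show "measure (distr N borel Y) {y..y + e} \<le> (SUP x. measure (distr M borel X) {x..x + e})"
    using assms unfolding disp_le_def
    by (intro measure_Icc_le_SUP_of_quantile_diff_le prob_space.real_distribution_distr) auto
qed simp

context prob_space
begin

lemma conc_eq_conc_nat_floor:
  assumes X: "X \<in> borel_measurable M" and nat: "AE \<omega> in M. X \<omega> \<in> \<nat>"
    and k: "real k \<le> e" "e < real k + 1"
  shows "conc M X e = conc M X (real k)"
proof (rule antisym)
  show "conc M X (real k) \<le> conc M X e"
    using mono_conc[OF X] k(1) by (simp add: mono_def)
  show "conc M X e \<le> conc M X (real k)"
    unfolding conc_def[of M X e]
  proof (rule cSUP_least)
    fix x0 :: real
    define j where "j = real_of_int \<lceil>x0\<rceil>"
    have "real n \<in> {j..j + real k}" if "real n \<in> {x0..x0 + e}" for n :: nat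
    proof -
      have "real n \<le> x0 + e"
        using that by simp
      then have "real n < real_of_int \<lceil>x0\<rceil> + real k + 1"
        using k le_of_int_ceiling[of x0] by linarith
      then have "real_of_int (int n) < real_of_int (\<lceil>x0\<rceil> + int k + 1)"
        by simp
      then have "int n \<le> \<lceil>x0\<rceil> + int k"
        by (simp only: of_int_less_iff)
      moreover have "\<lceil>x0\<rceil> \<le> int n"
        using that by (simp add: ceiling_le_iff)
      ultimately show ?thesis
        unfolding j_def by simp
    qed
    then have "AE \<omega> in M. X \<omega> \<in> {x0..x0 + e} \<longrightarrow> X \<omega> \<in> {j..j + real k}"
      using nat by (auto elim!: eventually_mono Nats_cases)
    then have "prob {\<omega> \<in> space M. X \<omega> \<in> {x0..x0 + e}} \<le> prob {\<omega> \<in> space M. X \<omega> \<in> {j..j + real k}}"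
      using X by (intro finite_measure_mono_AE) (auto elim!: eventually_mono)
    also have "\<dots> \<le> conc M X (real k)"
      by (rule prob_Icc_le_conc)
    finally show "prob {\<omega> \<in> space M. X \<omega> \<in> {x0..x0 + e}} \<le> conc M X (real k)" .
  qed simp
qed

lemma conc_0_eq_SUP_nat:
  assumes nat: "AE \<omega> in M. X \<omega> \<in> \<nat>"
  shows "conc M X 0 = (SUP j::nat. prob {\<omega> \<in> space M. X \<omega> = real j})"
proof (rule antisym)
  have bdd: "bdd_above (range (\<lambda>j::nat. prob {\<omega> \<in> space M. X \<omega> = real j}))"
    by (intro bdd_aboveI[of _ 1]) auto
  show "conc M X 0 \<le> (SUP j::nat. prob {\<omega> \<in> space M. X \<omega> = real j})"
    unfolding conc_def
  proof (rule cSUP_least)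
    fix x0 :: real
    show "prob {\<omega> \<in> space M. X \<omega> \<in> {x0..x0 + 0}} \<le> (SUP j::nat. prob {\<omega> \<in> space M. X \<omega> = real j})"
    proof (cases "x0 \<in> \<nat>")
      case True
      then obtain j :: nat where "x0 = real j" by (auto elim: Nats_cases)
      then show ?thesis using cSUP_upper[OF _ bdd, of j] by simp
    next
      case False
      then have "prob {\<omega> \<in> space M. X \<omega> \<in> {x0..x0 + 0}} = 0"
        using nat by (intro prob_eq_0_AE) (auto elim!: eventually_mono)
      also have "\<dots> \<le> (SUP j::nat. prob {\<omega> \<in> space M. X \<omega> = real j})"
        using cSUP_upper[OF _ bdd, of 0] measure_nonneg[of M] by (meson UNIV_I order_trans)
      finally show ?thesis .
    qed
  qed simp
  show "(SUP j::nat. prob {\<omega> \<in> space M. X \<omega> = real j}) \<le> conc M X 0"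
    using prob_Icc_le_conc[of X "real _" 0] by (intro cSUP_least) auto
qed

end

lemma nn_integral_powr_Icc:
  assumes "0 < r" "0 \<le> a" "a \<le> b"
  shows "(\<integral>\<^sup>+ x. ennreal (x powr (r - 1)) * indicator {a..b} x \<partial>lborel)
    = ennreal ((b powr r - a powr r) / r)"
proof -
  have "((\<lambda>x. x powr (r - 1)) has_integral (b powr r / r - a powr r / r)) {a..b}"
  proof (rule fundamental_theorem_of_calculus_interior)
    show "continuous_on {a..b} (\<lambda>x. x powr r / r)"
      using assms by (intro continuous_intros continuous_on_powr') auto
    fix x assume "x \<in> {a<..<b}"
    then have "0 < x" using assms by simp
    then have "((\<lambda>x. x powr r / r) has_real_derivative (r * x powr (r - 1)) / r) (at x)"
      by (intro DERIV_cdivide has_real_derivative_powr)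
    then show "((\<lambda>x. x powr r / r) has_vector_derivative x powr (r - 1)) (at x)"
      using assms by (simp add: has_real_derivative_iff_has_vector_derivative)
  qed (use assms in simp)
  then show ?thesis
    by (subst nn_integral_has_integral_lebesgue') (auto simp: diff_divide_distrib)
qed

lemma nn_integral_atLeast_0_eq_suminf_unit_intervals:
  assumes [measurable]: "f \<in> borel_measurable borel"
  shows "(\<integral>\<^sup>+ x \<in> {0..}. f x \<partial>lborel) = (\<Sum>k. \<integral>\<^sup>+ x \<in> {real k..<real k + 1}. f x \<partial>lborel)"
proof -
  have "\<exists>k::nat. real k \<le> x \<and> x < real k + 1" if "0 \<le> x" for x :: real
    using that by (intro exI[of _ "nat \<lfloor>x\<rfloor>"]) simp
  then have "{0..} = (\<Union>k. {real k..<real k + 1})"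
    by (force intro: order_trans[OF of_nat_0_le_iff])
  moreover have "disjoint_family (\<lambda>k::nat. {real k..<real k + 1})"
    unfolding disjoint_family_on_def by (auto simp: linorder_neq_iff)
  ultimately show ?thesis
    by (simp add: nn_integral_disjoint_family)
qed

lemma conc_integral_eq_suminf:
  assumes r: "0 < r" and [measurable]: "c \<in> borel_measurable borel" and le1: "\<And>e. c e \<le> 1"
    and step: "\<And>k e. real k \<le> e \<Longrightarrow> e < real k + 1 \<Longrightarrow> c e = c (real k)"
  shows "ennreal r * conc_integral r c
    = (\<Sum>k. ennreal (((real k + 1) powr r - real k powr r) * (1 - c (real k))))"
proof -
  define f where "f x = ennreal (x powr (r - 1) * (1 - c x))" for x
  have piece: "(\<integral>\<^sup>+ x \<in> {real k..<real k + 1}. f x \<partial>lborel)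
      = ennreal (((real k + 1) powr r - real k powr r) / r) * ennreal (1 - c (real k))" for k
  proof -
    have "AE x in lborel. f x * indicator {real k..<real k + 1} x
        = ennreal (x powr (r - 1)) * indicator {real k..real k + 1} x * ennreal (1 - c (real k))"
      using AE_lborel_singleton[of "real k + 1"]
      by eventually_elim (auto simp: f_def step le1 ennreal_mult indicator_def)
    then have "(\<integral>\<^sup>+ x \<in> {real k..<real k + 1}. f x \<partial>lborel)
        = (\<integral>\<^sup>+ x. ennreal (x powr (r - 1)) * indicator {real k..real k + 1} x \<partial>lborel) * ennreal (1 - c (real k))"
      by (simp add: nn_integral_cong_AE nn_integral_multc)
    then show ?thesis
      using r by (simp add: nn_integral_powr_Icc)
  qed
  \<comment> \<open>the point 0 may be added to the domain since 0 powr (r - 1) = 0\<close>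
  have "conc_integral r c = (\<integral>\<^sup>+ x \<in> {0..}. f x \<partial>lborel)"
    unfolding conc_integral_def f_def
    by (intro nn_integral_cong) (auto simp: indicator_def)
  also have "\<dots> = (\<Sum>k. ennreal (((real k + 1) powr r - real k powr r) / r) * ennreal (1 - c (real k)))"
    unfolding f_def by (simp add: nn_integral_atLeast_0_eq_suminf_unit_intervals piece[unfolded f_def])
  finally have "ennreal r * conc_integral r c
      = (\<Sum>k. ennreal r * (ennreal (((real k + 1) powr r - real k powr r) / r) * ennreal (1 - c (real k))))"
    by simp
  also have "\<dots> = (\<Sum>k. ennreal (((real k + 1) powr r - real k powr r) * (1 - c (real k))))"
  proof (rule suminf_cong)
    fix k :: nat
    have "0 \<le> (real k + 1) powr r - real k powr r"
      using r by (simp add: powr_mono2)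
    then show "ennreal r * (ennreal (((real k + 1) powr r - real k powr r) / r) * ennreal (1 - c (real k)))
      = ennreal (((real k + 1) powr r - real k powr r) * (1 - c (real k)))"
      using r le1[of "real k"] by (simp add: ennreal_mult[symmetric] mult.assoc[symmetric])
  qed
  finally show ?thesis .
qed

lemma (in prob_space) nu_nat_valued:
  assumes r: "0 < r" and X: "X \<in> borel_measurable M" and nat: "AE \<omega> in M. X \<omega> \<in> \<nat>"
  shows "nu r M X = ennreal (1 / 2) * enn_root r
    (\<Sum>k::nat. ennreal (((real k + 1) powr r - real k powr r) *
      (1 - (if k = 0 then (SUP j::nat. measure M {\<omega> \<in> space M. X \<omega> = real j})
            else conc M X (real k)))))"
proof -
  have "(if k = 0 then (SUP j::nat. measure M {\<omega> \<in> space M. X \<omega> = real j}) else conc M X (real k))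
      = conc M X (real k)" for k :: nat
    using conc_0_eq_SUP_nat[OF nat] by simp
  moreover have "(\<Sum>k. ennreal (((real k + 1) powr r - real k powr r) * (1 - conc M X (real k))))
      = ennreal r * conc_integral r (conc M X)"
    using r borel_measurable_conc[OF X] conc_le_1 conc_eq_conc_nat_floor[OF X nat]
    by (intro conc_integral_eq_suminf[symmetric]) auto
  moreover have "enn_root r (ennreal r * conc_integral r (conc M X))
      = ennreal (r powr (1 / r)) * enn_root r (conc_integral r (conc M X))"
    by (rule enn_root_mult[OF r r])
  moreover have "ennreal (1 / 2) * ennreal (r powr (1 / r)) = ennreal (r powr (1 / r) / 2)"
    by (subst ennreal_mult[symmetric]) auto
  ultimately show ?thesis
    by (simp add: nu_eq_conc_integral mult.assoc[symmetric])
qed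

theorem mainTheorem15:
  fixes r :: real and M :: "'a measure" and X :: "'a \<Rightarrow> real"
    and N :: "'b measure" and Y :: "'b \<Rightarrow> real"
  assumes r: "r \<ge> 1"
    and M: "prob_space M" and X: "X \<in> borel_measurable M"
    and N: "prob_space N" and Y: "Y \<in> borel_measurable N"
  shows "(distr M borel X = distr N borel Y \<longrightarrow> nu r M X = nu r N Y)
    \<and> (\<forall>k::real. nu r M (\<lambda>\<omega>. X \<omega> + k) = nu r M X)
    \<and> (\<forall>a::real. nu r M (\<lambda>\<omega>. a * X \<omega>) = ennreal \<bar>a\<bar> * nu r M X)
    \<and> nu r M X \<ge> 0
    \<and> ((\<exists>c::real. AE \<omega> in M. X \<omega> = c) \<longrightarrow> nu r M X = 0)
    \<and> (wd_le M X N Y \<longrightarrow> nu r M X \<le> nu r N Y)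
    \<and> (disp_le M X N Y \<longrightarrow> nu r M X \<le> nu r N Y)
    \<and> ((AE \<omega> in M. X \<omega> \<in> \<nat>) \<longrightarrow>
         nu r M X = ennreal (1 / 2) * enn_root r
           (\<Sum>k::nat. ennreal (((real k + 1) powr r - real k powr r) *
              (1 - (if k = 0 then (SUP j::nat. measure M {\<omega> \<in> space M. X \<omega> = real j})
                    else conc M X (real k))))))"
proof -
  interpret M: prob_space M by (rule M)
  have "0 < r" using r by simp
  have "distr M borel X = distr N borel Y \<longrightarrow> nu r M X = nu r N Y"
    using conc_eq_if_distr_eq[OF X Y] by (simp add: nu_eq_conc_integral)
  moreover have wd: "wd_le M X N Y \<longrightarrow> nu r M X \<le> nu r N Y"
    using nu_mono_wd_le[OF \<open>0 < r\<close>] by blast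
  moreover have "disp_le M X N Y \<longrightarrow> nu r M X \<le> nu r N Y"
    using wd disp_le_imp_wd_le[OF M X N Y] by blast
  ultimately show ?thesis
    using M.nu_add_const M.nu_mult[OF \<open>0 < r\<close> X] M.nu_AE_const[OF X] M.nu_nat_valued[OF \<open>0 < r\<close> X]
    by auto
qed

end
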